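(* Let $\lambda$ be a nonzero real number and $n\ge1$ an integer. Then, as polynomials in $x$, $$\sum_{k=1}^{n}S_{2,\lambda}(n,k)\frac{x^{k}}{k}=\frac{1}{n}\sum_{j=0}^{n-1}\binom{n}{j}\beta_{j,\lambda}(1-\lambda)\,\phi_{n-j,\lambda}(x).$$ In particular, for $x=1$, $$\sum_{k=1}^{n}\frac{S_{2,\lambda}(n,k)}{k}=\frac{1}{n}\sum_{j=0}^{n-1}\binom{n}{j}\beta_{j,\lambda}(1-\lambda)\,\phi_{n-j,\lambda},$$ where $\phi_{m,\lambda}=\phi_{m,\lambda}(1)$.
   Context: For real $y$ and integer $k\ge0$: $(y)_{0,\lambda}=1$, $(y)_{k,\lambda}=y(y-\lambda)\cdots(y-(k-1)\lambda)$; $(y)_0=1$, $(y)_k=y(y-1)\cdots(y-k+1)$. The degenerate exponential is $e_\lambda^x(t)=\sum_{k\ge0}(x)_{k,\lambda}t^k/k!=(1+\lambda t)^{x/\lambda}$, $e_\lambda(t)=e^1_\lambda(t)$. The degenerate Bernoulli polynomials are defined by $\frac{t}{e_\lambda(t)-1}e_\lambda^x(t)=\sum_{n\ge0}\beta_{n,\lambda}(x)\frac{t^n}{n!}$. The degenerate Bell polynomials are defined by $e^{x(e_\lambda(t)-1)}=\sum_{n\ge0}\phi_{n,\lambda}(x)\frac{t^n}{n!}$, and the degenerate Bell numbers are $\phi_{n,\lambda}=\phi_{n,\lambda}(1)$. The degenerate Stirling numbers of the second kind are defined by $(x)_{n,\lambda}=\sum_{k=0}^{n}S_{2,\lambda}(n,k)(x)_{k}$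 ($n\ge0$). *)

theory Defs
  imports "HOL-Computational_Algebra.Formal_Power_Series"
begin

definition dfall :: "real \<Rightarrow> real \<Rightarrow> nat \<Rightarrow> real" where
  "dfall lam y k = (\<Prod>i<k. (y - of_nat i * lam))"

definition ffall :: "real \<Rightarrow> nat \<Rightarrow> real" where
  "ffall y k = (\<Prod>i<k. (y - of_nat i))"

definition dexp :: "real \<Rightarrow> real \<Rightarrow> real fps" where
  "dexp lam x = Abs_fps (\<lambda>k. dfall lam x k / fact k)"

text \<open>Degenerate Bernoulli polynomials: t/(e_lambda(t)-1) e_lambda^x(t) = sum beta_{n,lambda}(x) t^n/n!.
  Here t/(e_lambda(t)-1) is the inverse of the series (e_lambda(t)-1)/t.\<close>
definition dbernoulli :: "real \<Rightarrow> nat \<Rightarrow> real \<Rightarrow> real" where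
  "dbernoulli lam n x =
     fact n * fps_nth (inverse (fps_shift 1 (dexp lam 1 - 1)) * dexp lam x) n"

definition dbell :: "real \<Rightarrow> nat \<Rightarrow> real \<Rightarrow> real" where
  "dbell lam n x = fact n * fps_nth (fps_compose (fps_exp x) (dexp lam 1 - 1)) n"

text \<open>Degenerate Stirling numbers of the second kind, defined by
  (x)_{n,lambda} = sum_{k=0}^n S2_lambda(n,k) (x)_k for all x
  (coefficients normalised to 0 beyond n so that they are unique).\<close>
definition dstirling2 :: "real \<Rightarrow> nat \<Rightarrow> nat \<Rightarrow> real" where
  "dstirling2 lam n = (THE c. (\<forall>k>n. c k = 0) \<and>
      (\<forall>x::real. dfall lam x n = (\<Sum>k\<le>n. c k * ffall x k)))"

end

theory Submission
  imports Defs
begin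

(* Write E = e_lambda(t). Reading off coefficients of the ODE (1 + lambda t) E' = E gives the
   triangular recurrence that characterises S2_lambda(n,k), whence
   (E - 1)^k / k! = sum_n S2_lambda(n,k) t^n / n!, and composing with exp(x .) gives
   phi_{n,lambda}(x) = sum_k S2_lambda(n,k) x^k. Since E' = e_lambda^{1-lambda}(t), the Bernoulli
   series t e_lambda^{1-lambda}(t) / (E - 1) equals t E' / (E - 1), and its product with (E - 1)^k
   is t ((E - 1)^k)' / k. Comparing coefficients of t^n gives, for k >= 1,
   sum_j C(n,j) beta_{j,lambda}(1 - lambda) S2_lambda(n - j, k) = (n / k) S2_lambda(n,k),
   and summing this against x^k / n yields the theorem. *)

unbundle fps_syntax

lemma dfall_Suc: "dfall lam x (Suc n) = dfall lam x n * (x - of_nat n * lam)"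
  by (simp add: dfall_def)

lemma dfall_Suc_shift: "dfall lam x (Suc n) = x * dfall lam (x - lam) n"
  unfolding dfall_def prod.lessThan_Suc_shift by (simp add: algebra_simps)

lemma ffall_Suc: "ffall x (Suc n) = ffall x n * (x - of_nat n)"
  by (simp add: ffall_def)

lemma dexp_nth_0 [simp]: "dexp lam x $ 0 = 1"
  by (simp add: dexp_def dfall_def)

lemma fps_deriv_dexp: "fps_deriv (dexp lam x) = fps_const x * dexp lam (x - lam)"
proof (rule fps_ext)
  fix n
  have "fps_deriv (dexp lam x) $ n = of_nat (Suc n) * (dfall lam x (Suc n) / fact (Suc n))"
    by (simp add: dexp_def)
  also have "\<dots> = x * (dfall lam (x - lam) n / fact n)"
    by (simp add: dfall_Suc_shift fact_Suc del: of_nat_Suc)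
  finally show "fps_deriv (dexp lam x) $ n = (fps_const x * dexp lam (x - lam)) $ n"
    by (simp add: dexp_def)
qed

lemma one_plus_X_mult_dexp: "(1 + fps_const lam * fps_X) * dexp lam (x - lam) = dexp lam x"
proof (rule fps_ext)
  fix n
  show "((1 + fps_const lam * fps_X) * dexp lam (x - lam)) $ n = dexp lam x $ n"
  proof (cases n)
    case (Suc m)
    define d where "d = dfall lam (x - lam) m"
    have "((1 + fps_const lam * fps_X) * dexp lam (x - lam)) $ n
        = d * (x - lam - of_nat m * lam) / fact (Suc m) + lam * (d / fact m)"
      by (simp add: Suc d_def dexp_def dfall_Suc algebra_simps del: fact_Suc)
    also have "\<dots> = x * d / fact (Suc m)"
      by (simp add: fact_Suc field_simps del: of_nat_Suc) (simp add: algebra_simps)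
    also have "\<dots> = dexp lam x $ n"
      by (simp add: Suc d_def dexp_def dfall_Suc_shift del: fact_Suc)
    finally show ?thesis .
  qed (simp add: algebra_simps)
qed

lemma dexp_ode: "(1 + fps_const lam * fps_X) * fps_deriv (dexp lam 1) = dexp lam 1"
  by (simp add: fps_deriv_dexp one_plus_X_mult_dexp[of lam 1, simplified])

lemma fps_X_mult_deriv_power:
  fixes f :: "'a::field fps"
  assumes "f $ 0 = 0" and "f $ 1 \<noteq> 0" and "k \<ge> 1"
  shows "of_nat k * (inverse (fps_shift 1 f) * fps_deriv f * f ^ k) = fps_X * fps_deriv (f ^ k)"
proof -
  have f: "f = fps_X * fps_shift 1 f"
    using assms(1) by (intro fps_ext) simp
  have inv: "inverse (fps_shift 1 f) * fps_shift 1 f = 1"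
    using assms(2) by (intro inverse_mult_eq_1) simp
  have "f ^ k = fps_X * fps_shift 1 f * f ^ (k - 1)"
    using assms(3) f by (cases k) simp_all
  then have "inverse (fps_shift 1 f) * fps_deriv f * f ^ k
      = fps_X * (fps_deriv f * f ^ (k - 1)) * (inverse (fps_shift 1 f) * fps_shift 1 f)"
    by (simp only: ac_simps)
  then show ?thesis
    unfolding fps_deriv_power' inv by (simp only: ac_simps mult_1_left)
qed


lemma fps_nth_inverse_shift_deriv_mult_power:
  fixes f :: "'a::field_char_0 fps"
  assumes "f $ 0 = 0" and "f $ 1 \<noteq> 0" and "k \<ge> 1"
  shows "(inverse (fps_shift 1 f) * fps_deriv f * f ^ k) $ n = of_nat n * (f ^ k $ n) / of_nat k"
proof -
  have "of_nat k * ((inverse (fps_shift 1 f) * fps_deriv f * f ^ k) $ n) = of_nat n * (f ^ k $ n)"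
    using arg_cong[OF fps_X_mult_deriv_power[OF assms], of "\<lambda>g. g $ n"] by (cases n) simp_all
  then show ?thesis
    using assms(3) by (simp add: field_simps)
qed

definition dstirling2_gf :: "real \<Rightarrow> nat \<Rightarrow> nat \<Rightarrow> real" where
  "dstirling2_gf lam n k = fact n / fact k * ((dexp lam 1 - 1) ^ k $ n)"

lemma dstirling2_gf_eq_0: "n < k \<Longrightarrow> dstirling2_gf lam n k = 0"
  by (simp add: dstirling2_gf_def startsby_zero_power_prefix)

lemma dstirling2_gf_0_0: "dstirling2_gf lam 0 0 = 1"
  by (simp add: dstirling2_gf_def)

lemma dstirling2_gf_Suc_0: "dstirling2_gf lam (Suc n) 0 = 0"
  by (simp add: dstirling2_gf_def)

(* Coefficients of (1 + lambda t) ((E - 1)^(k+1))' = (k + 1) E (E - 1)^k. *)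
lemma dexp_minus_1_power_nth_Suc:
  "of_nat (Suc n) * ((dexp lam 1 - 1) ^ Suc k $ Suc n)
     = (of_nat (Suc k) - lam * of_nat n) * ((dexp lam 1 - 1) ^ Suc k $ n)
       + of_nat (Suc k) * ((dexp lam 1 - 1) ^ k $ n)"
proof -
  let ?P = "dexp lam 1 - 1"
  have "(1 + fps_const lam * fps_X) * fps_deriv (?P ^ Suc k)
      = of_nat (Suc k) * ((1 + fps_const lam * fps_X) * fps_deriv (dexp lam 1)) * ?P ^ k"
    unfolding fps_deriv_power' by (simp add: ac_simps)
  also have "\<dots> = of_nat (Suc k) * (?P ^ Suc k + ?P ^ k)"
    unfolding dexp_ode by (simp add: algebra_simps)
  finally have ode: "(1 + fps_const lam * fps_X) * fps_deriv (?P ^ Suc k)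
      = of_nat (Suc k) * (?P ^ Suc k + ?P ^ k)" .
  show ?thesis
    using arg_cong[OF ode, of "\<lambda>g. g $ n"] by (cases n) (simp_all add: algebra_simps del: power_Suc)
qed

lemma dstirling2_gf_Suc_Suc:
  "dstirling2_gf lam (Suc n) (Suc k)
     = (of_nat (Suc k) - lam * of_nat n) * dstirling2_gf lam n (Suc k) + dstirling2_gf lam n k"
proof -
  let ?c = "\<lambda>n k. (dexp lam 1 - 1) ^ k $ n"
  have "dstirling2_gf lam (Suc n) (Suc k) = fact n / fact (Suc k) * (of_nat (Suc n) * ?c (Suc n) (Suc k))"
    by (simp add: dstirling2_gf_def fact_Suc del: of_nat_Suc)
  also have "\<dots> = fact n / fact (Suc k) * ((of_nat (Suc k) - lam * of_nat n) * ?c n (Suc k)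
                                           + of_nat (Suc k) * ?c n k)"
    by (simp only: dexp_minus_1_power_nth_Suc)
  also have "\<dots> = (of_nat (Suc k) - lam * of_nat n) * dstirling2_gf lam n (Suc k) + dstirling2_gf lam n k"
    unfolding dstirling2_gf_def by (simp add: fact_Suc field_simps del: of_nat_Suc)
  finally show ?thesis .
qed


lemma dfall_eq_sum_dstirling2_gf: "dfall lam x n = (\<Sum>k\<le>n. dstirling2_gf lam n k * ffall x k)"
proof (induction n)
  case 0
  show ?case by (simp add: dstirling2_gf_0_0 dfall_def ffall_def)
next
  case (Suc n)
  let ?S = "dstirling2_gf lam n"
  define g where "g k = (of_nat k - lam * of_nat n) * ?S k * ffall x k" for k
  have g_0: "g 0 = 0"
    by (cases n) (simp_all add: g_def dstirling2_gf_Suc_0)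
  have g_Suc: "g (Suc n) = 0"
    by (simp add: g_def dstirling2_gf_eq_0)
  have "(\<Sum>k\<le>Suc n. dstirling2_gf lam (Suc n) k * ffall x k)
      = (\<Sum>k\<le>n. dstirling2_gf lam (Suc n) (Suc k) * ffall x (Suc k))"
    by (simp add: sum.atMost_Suc_shift dstirling2_gf_Suc_0 del: sum.atMost_Suc)
  also have "\<dots> = (\<Sum>k\<le>n. g (Suc k)) + (\<Sum>k\<le>n. ?S k * ffall x (Suc k))"
    unfolding sum.distrib[symmetric]
    by (intro sum.cong) (simp_all add: dstirling2_gf_Suc_Suc g_def algebra_simps del: of_nat_Suc)
  also have "(\<Sum>k\<le>n. g (Suc k)) = (\<Sum>k\<le>n. g k)"
    using sum.atMost_Suc_shift[of g n] g_0 g_Suc by simp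
  also have "(\<Sum>k\<le>n. g k) + (\<Sum>k\<le>n. ?S k * ffall x (Suc k))
      = (\<Sum>k\<le>n. ?S k * ffall x k) * (x - of_nat n * lam)"
    unfolding sum.distrib[symmetric] sum_distrib_right
    by (intro sum.cong) (simp_all add: g_def ffall_Suc algebra_simps)
  also have "\<dots> = dfall lam x (Suc n)"
    by (simp add: dfall_Suc Suc.IH)
  finally show ?case ..
qed

lemma ffall_of_nat_eq_0: "k < j \<Longrightarrow> ffall (of_nat k) j = 0"
  unfolding ffall_def by (rule prod_zero) auto

lemma ffall_of_nat_self_neq_0: "ffall (of_nat k) k \<noteq> 0"
  unfolding ffall_def by (rule prod_pos[THEN less_imp_neq, symmetric]) auto

lemma sum_ffall_eq_0_imp_eq_0:
  assumes "\<forall>k>n. c k = 0" and "\<forall>x. (\<Sum>k\<le>n. c k * ffall x k) = 0"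
  shows "c k = 0"
proof (induction k rule: less_induct)
  case (less k)
  show ?case
  proof (cases "k \<le> n")
    case False
    then show ?thesis using assms(1) by simp
  next
    case True
    have "(\<Sum>j\<in>{..n}-{k}. c j * ffall (of_nat k) j) = 0"
    proof (intro sum.neutral ballI)
      fix j assume "j \<in> {..n} - {k}"
      then have "j < k \<or> k < j" by auto
      then show "c j * ffall (of_nat k) j = 0"
        using less.IH ffall_of_nat_eq_0 by auto
    qed
    then have "c k * ffall (of_nat k) k = (\<Sum>j\<le>n. c j * ffall (of_nat k) j)"
      using True by (simp add: sum.remove[of _ k])
    then show ?thesis
      using assms(2) ffall_of_nat_self_neq_0[of k] by simp
  qed
qed

lemma dstirling2_eq_gf: "dstirling2 lam n = dstirling2_gf lam n"
  unfolding dstirling2_def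
proof (rule the_equality)
  show "(\<forall>k>n. dstirling2_gf lam n k = 0)
      \<and> (\<forall>x. dfall lam x n = (\<Sum>k\<le>n. dstirling2_gf lam n k * ffall x k))"
    using dstirling2_gf_eq_0 dfall_eq_sum_dstirling2_gf by blast
next
  fix c
  assume c: "(\<forall>k>n. c k = 0) \<and> (\<forall>x::real. dfall lam x n = (\<Sum>k\<le>n. c k * ffall x k))"
  have "c k - dstirling2_gf lam n k = 0" for k
  proof (rule sum_ffall_eq_0_imp_eq_0)
    show "\<forall>k>n. c k - dstirling2_gf lam n k = 0"
      using c dstirling2_gf_eq_0 by simp
    show "\<forall>x. (\<Sum>k\<le>n. (c k - dstirling2_gf lam n k) * ffall x k) = 0"
      using c dfall_eq_sum_dstirling2_gf by (simp add: algebra_simps sum_subtractf)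
  qed
  then show "c = dstirling2_gf lam n" by auto
qed


lemma dstirling2_eq_0: "n < k \<Longrightarrow> dstirling2 lam n k = 0"
  by (simp add: dstirling2_eq_gf dstirling2_gf_eq_0)

lemma dstirling2_Suc_0: "dstirling2 lam (Suc n) 0 = 0"
  by (simp add: dstirling2_eq_gf dstirling2_gf_Suc_0)

lemma dbell_eq_sum_dstirling2: "dbell lam n x = (\<Sum>k\<le>n. dstirling2 lam n k * x ^ k)"
  unfolding dbell_def fps_compose_nth atLeast0AtMost sum_distrib_left
  by (intro sum.cong) (simp_all add: dstirling2_eq_gf dstirling2_gf_def fps_exp_nth)

lemma sum_binomial_dbernoulli_dstirling2:
  assumes "k \<ge> 1"
  shows "(\<Sum>j\<le>n. of_nat (n choose j) * dbernoulli lam j (1 - lam) * dstirling2 lam (n - j) k)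
           = of_nat n / of_nat k * dstirling2 lam n k"
proof -
  let ?P = "dexp lam 1 - 1"
  let ?B = "inverse (fps_shift 1 ?P) * dexp lam (1 - lam)"
  have B: "?B = inverse (fps_shift 1 ?P) * fps_deriv ?P"
    by (simp add: fps_deriv_dexp)
  have P_nth: "?P $ 0 = 0" "?P $ 1 \<noteq> 0"
    by (simp_all add: dexp_def dfall_def)
  have "of_nat (n choose j) * dbernoulli lam j (1 - lam) * dstirling2 lam (n - j) k
      = fact n / fact k * (?B $ j * ?P ^ k $ (n - j))" if "j \<le> n" for j
    using that by (simp add: dbernoulli_def dstirling2_eq_gf dstirling2_gf_def binomial_fact)
  then have "(\<Sum>j\<le>n. of_nat (n choose j) * dbernoulli lam j (1 - lam) * dstirling2 lam (n - j) k)
      = fact n / fact k * (?B * ?P ^ k) $ n"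
    by (simp add: fps_mult_nth atLeast0AtMost sum_distrib_left)
  also have "(?B * ?P ^ k) $ n = of_nat n * (?P ^ k $ n) / of_nat k"
    unfolding B using fps_nth_inverse_shift_deriv_mult_power[OF P_nth assms] .
  finally show ?thesis
    by (simp add: dstirling2_eq_gf dstirling2_gf_def ac_simps)
qed

lemma sum_dstirling2_div_eq_sum_dbernoulli_dbell:
  assumes "n \<ge> 1"
  shows "(\<Sum>k=1..n. dstirling2 lam n k * x ^ k / of_nat k)
           = 1 / of_nat n * (\<Sum>j=0..n-1. of_nat (n choose j) * dbernoulli lam j (1 - lam)
                                          * dbell lam (n - j) x)"
proof -
  obtain m where n: "n = Suc m"
    using assms by (cases n) auto
  then have n_minus_1: "n - 1 = m"
    by simp
  let ?c = "\<lambda>j. of_nat (n choose j) * dbernoulli lam j (1 - lam)"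
  have bell: "dbell lam (n - j) x = (\<Sum>k=1..n. dstirling2 lam (n - j) k * x ^ k)" if "j \<le> m" for j
  proof -
    have "dbell lam (n - j) x = (\<Sum>k\<le>n. dstirling2 lam (n - j) k * x ^ k)"
      unfolding dbell_eq_sum_dstirling2 by (intro sum.mono_neutral_left) (auto simp: dstirling2_eq_0)
    also have "\<dots> = (\<Sum>k=1..n. dstirling2 lam (n - j) k * x ^ k)"
      using that by (simp add: n atMost_atLeast0 sum.atLeast_Suc_atMost Suc_diff_le dstirling2_Suc_0)
    finally show ?thesis .
  qed
  have "(\<Sum>j=0..n-1. ?c j * dbell lam (n - j) x)
      = (\<Sum>j=0..m. \<Sum>k=1..n. x ^ k * (?c j * dstirling2 lam (n - j) k))"
    unfolding n_minus_1 by (intro sum.cong) (simp_all add: bell sum_distrib_left ac_simps)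
  also have "\<dots> = (\<Sum>k=1..n. x ^ k * (\<Sum>j=0..m. ?c j * dstirling2 lam (n - j) k))"
    by (subst sum.swap) (simp add: sum_distrib_left)
  also have "\<dots> = (\<Sum>k=1..n. x ^ k * (of_nat n / of_nat k * dstirling2 lam n k))"
  proof (intro sum.cong refl)
    fix k assume k: "k \<in> {1..n}"
    then have "(\<Sum>j=0..m. ?c j * dstirling2 lam (n - j) k) = (\<Sum>j\<le>n. ?c j * dstirling2 lam (n - j) k)"
      by (simp add: n atMost_atLeast0 dstirling2_eq_0)
    with k show "x ^ k * (\<Sum>j=0..m. ?c j * dstirling2 lam (n - j) k)
        = x ^ k * (of_nat n / of_nat k * dstirling2 lam n k)"
      by (simp add: sum_binomial_dbernoulli_dstirling2)
  qed
  finally show ?thesis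
    using assms by (simp add: sum_distrib_left field_simps)
qed

theorem theorem12:
  fixes lam :: real and n :: nat
  assumes "lam \<noteq> 0" and "n \<ge> 1"
  shows "(\<forall>x::real. (\<Sum>k=1..n. dstirling2 lam n k * x ^ k / of_nat k) =
            (1 / of_nat n) * (\<Sum>j=0..n-1. of_nat (n choose j) * dbernoulli lam j (1 - lam)
                                          * dbell lam (n - j) x))
       \<and> (\<Sum>k=1..n. dstirling2 lam n k / of_nat k) =
            (1 / of_nat n) * (\<Sum>j=0..n-1. of_nat (n choose j) * dbernoulli lam j (1 - lam)
                                          * dbell lam (n - j) 1)"
  using sum_dstirling2_div_eq_sum_dbernoulli_dbell[OF assms(2), of lam]
    sum_dstirling2_div_eq_sum_dbernoulli_dbell[OF assms(2), of lam 1] by simp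

end
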